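(* Let $\nu\ge1$, $\omega>0$, $\lambda_1,\dots,\lambda_\nu\ge0$, $c_{\omega,\lambda}=(\omega^2+4\sum_{j=1}^\nu\lambda_j)^{1/2}$, $L$ a positive integer, $\Lambda_L=(-L,L]^\nu\cap\mathbb Z^\nu$, $\Lambda_L^*=\{\pi x/L:x\in\Lambda_L\}$, $\gamma(k)=\sqrt{\omega^2+4\sum_j\lambda_j\sin^2(k_j/2)}$, and define for $x\in\Lambda_L$, $t\in\mathbb R$ $$h^{(L)}_{1,t}(x)=\frac i2\,\mathrm{Im}\Big[\frac1{|\Lambda_L|}\sum_{k\in\Lambda_L^*}\Big(\gamma(k)+\frac1{\gamma(k)}\Big)e^{ik\cdot x-2i\gamma(k)t}\Big]+\mathrm{Re}\Big[\frac1{|\Lambda_L|}\sum_{k\in\Lambda_L^*}e^{ik\cdot x-2i\gamma(k)t}\Big],$$ $$h^{(L)}_{2,t}(x)=\frac i2\,\mathrm{Im}\Big[\frac1{|\Lambda_L|}\sum_{k\in\Lambda_L^*}\Big(\gamma(k)-\frac1{\gamma(k)}\Big)e^{ik\cdot x-2i\gamma(k)t}\Big].$$ Then for $m=1,2$, all $\mu>0$, $t\in\mathbb R$, $x\in\Lambda_L$ and every $L$, $$|h^{(L)}_{m,t}(x)|\le\Big(1+\tfrac12c_{\omega,\lambda}e^{\mu/2}+\tfrac12c_{\omega,\lambda}^{-1}\Big)e^{-\mu\left(|x|-c_{\omega,\lambda}\max\left(\frac2\mu,e^{(\mu/2)+1}\right)|t|\right)},$$ where $|x|=\sum_{j=1}^\nu|x_j|$.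 *)

theory Defs
  imports Complex_Main
begin

text \<open>Dimension nu = CARD('n) (at least 1, since types are nonempty).
  Sites of Z^nu are functions 'n => int.\<close>

definition c_wl :: "real \<Rightarrow> ('n::finite \<Rightarrow> real) \<Rightarrow> real" where
  "c_wl \<omega> lam = sqrt (\<omega>^2 + 4 * (\<Sum>j\<in>UNIV. lam j))"

definition gam :: "real \<Rightarrow> ('n::finite \<Rightarrow> real) \<Rightarrow> ('n \<Rightarrow> real) \<Rightarrow> real" where
  "gam \<omega> lam k = sqrt (\<omega>^2 + 4 * (\<Sum>j\<in>UNIV. lam j * (sin (k j / 2))^2))"

definition Lam :: "nat \<Rightarrow> ('n::finite \<Rightarrow> int) set" where
  "Lam L = {x. \<forall>j. - int L < x j \<and> x j \<le> int L}"

definition Lam_star :: "nat \<Rightarrow> ('n::finite \<Rightarrow> real) set" where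
  "Lam_star L = (\<lambda>x j. pi * real_of_int (x j) / real L) ` Lam L"

definition dotp :: "('n::finite \<Rightarrow> real) \<Rightarrow> ('n \<Rightarrow> int) \<Rightarrow> real" where
  "dotp k x = (\<Sum>j\<in>UNIV. k j * real_of_int (x j))"

definition l1norm :: "('n::finite \<Rightarrow> int) \<Rightarrow> real" where
  "l1norm x = (\<Sum>j\<in>UNIV. \<bar>real_of_int (x j)\<bar>)"

definition avg :: "real \<Rightarrow> ('n::finite \<Rightarrow> real) \<Rightarrow> nat \<Rightarrow> (('n \<Rightarrow> real) \<Rightarrow> real)
    \<Rightarrow> real \<Rightarrow> ('n \<Rightarrow> int) \<Rightarrow> complex" where
  "avg \<omega> lam L g t x = (1 / of_nat (card (Lam L :: ('n \<Rightarrow> int) set))) *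
     (\<Sum>k\<in>Lam_star L. complex_of_real (g k) *
        exp (\<i> * complex_of_real (dotp k x) - 2 * \<i> * complex_of_real (gam \<omega> lam k) * complex_of_real t))"

definition h1 :: "real \<Rightarrow> ('n::finite \<Rightarrow> real) \<Rightarrow> nat \<Rightarrow> real \<Rightarrow> ('n \<Rightarrow> int) \<Rightarrow> complex" where
  "h1 \<omega> lam L t x =
     (\<i> / 2) * complex_of_real (Im (avg \<omega> lam L (\<lambda>k. gam \<omega> lam k + 1 / gam \<omega> lam k) t x))
     + complex_of_real (Re (avg \<omega> lam L (\<lambda>k. 1) t x))"

definition h2 :: "real \<Rightarrow> ('n::finite \<Rightarrow> real) \<Rightarrow> nat \<Rightarrow> real \<Rightarrow> ('n \<Rightarrow> int) \<Rightarrow> complex" where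
  "h2 \<omega> lam L t x =
     (\<i> / 2) * complex_of_real (Im (avg \<omega> lam L (\<lambda>k. gam \<omega> lam k - 1 / gam \<omega> lam k) t x))"

end

theory Submission
  imports Defs "HOL-Library.FuncSet"
begin

text \<open>
  After reindexing by \<open>Lam L\<close> and using the symmetry \<open>n \<mapsto> -n\<close>, which fixes \<open>\<gamma>\<close> and flips the sign
  of \<open>sin (k \<bullet> x)\<close>, both \<open>h1\<close> and \<open>h2\<close> are combinations of the real sums
  \<open>\<Sum>n. \<phi> (\<gamma> k\<^sub>n) * cos (k\<^sub>n \<bullet> x)\<close> with \<open>\<phi> g = cos (2 g t)\<close>, \<open>g * sin (2 g t)\<close> and \<open>sin (2 g t) / g\<close>.
  Since \<open>\<gamma>\<^sup>2\<close> is a trigonometric polynomial of degree one in each coordinate of \<open>k\<close>, orthogonality of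
  the characters of the torus gives \<open>\<Sum>n. (\<gamma> k\<^sub>n)^(2m) * cos (k\<^sub>n \<bullet> x) = 0\<close> for \<open>m < |x|\<close>. Expanding
  the first two sums as power series in \<open>t\<close>, only the monomials of degree at least \<open>2|x|\<close> survive,
  so for every \<open>\<beta> \<ge> 1\<close> the sum is at most \<open>|Lam L| * exp (\<beta> z) / \<beta>^(2|x|)\<close> with \<open>z = 2 c |t|\<close>;
  choosing \<open>\<beta> = exp (\<mu>/2)\<close> or \<open>\<beta> = 2|x| / z\<close> gives the exponential decay. The third sum is the
  integral in \<open>t\<close> of twice the first.
\<close>

section \<open>Characters of the discrete torus\<close>

definition freq :: "nat \<Rightarrow> ('n::finite \<Rightarrow> int) \<Rightarrow> 'n \<Rightarrow> real" where
  "freq L n = (\<lambda>j. pi * real_of_int (n j) / real L)"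

definition torus_char :: "nat \<Rightarrow> ('n::finite \<Rightarrow> int) \<Rightarrow> ('n \<Rightarrow> int) \<Rightarrow> complex" where
  "torus_char L n y = cis (dotp (freq L n) y)"

lemma torus_char_add: "torus_char L n (\<lambda>j. y j + z j) = torus_char L n y * torus_char L n z"
  by (simp add: torus_char_def dotp_def cis_mult sum.distrib distrib_left)

lemma finite_Lam: "finite (Lam L :: ('n::finite \<Rightarrow> int) set)"
proof -
  have "Lam L = PiE UNIV (\<lambda>_::'n. {-int L<..int L})"
    by (auto simp: Lam_def PiE_def extensional_def)
  thus ?thesis by (simp add: finite_PiE)
qed

lemma card_Lam_pos: "L > 0 \<Longrightarrow> card (Lam L :: ('n::finite \<Rightarrow> int) set) > 0"
  using finite_Lam by (auto simp: card_gt_0_iff Lam_def intro!: exI[of _ "\<lambda>_. 0"])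

lemma in_LamD: "n \<in> Lam L \<Longrightarrow> - int L < n j \<and> n j \<le> int L"
  by (simp add: Lam_def)

lemma Lam_upd: "n \<in> Lam L \<Longrightarrow> - int L < v \<Longrightarrow> v \<le> int L \<Longrightarrow> n(j := v) \<in> Lam L"
  by (simp add: Lam_def)

definition cyc_shift :: "nat \<Rightarrow> 'n \<Rightarrow> ('n \<Rightarrow> int) \<Rightarrow> 'n \<Rightarrow> int" where
  "cyc_shift L j n = n(j := if n j = int L then 1 - int L else n j + 1)"

lemma bij_cyc_shift: "bij_betw (cyc_shift L j) (Lam L) (Lam L)"
proof (rule bij_betw_byWitness)
  let ?back = "\<lambda>n. n(j := if n j = 1 - int L then int L else n j - 1)"
  show "\<forall>n\<in>Lam L. ?back (cyc_shift L j n) = n"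
    by (auto simp: cyc_shift_def fun_eq_iff dest: in_LamD[of _ _ j])
  show "\<forall>n\<in>Lam L. cyc_shift L j (?back n) = n"
    by (auto simp: cyc_shift_def fun_eq_iff dest: in_LamD[of _ _ j])
  show "cyc_shift L j ` Lam L \<subseteq> Lam L" "?back ` Lam L \<subseteq> Lam L"
    by (auto simp: cyc_shift_def intro!: Lam_upd dest: in_LamD[of _ _ j])
qed

lemma torus_char_cyc_shift:
  assumes "L > 0"
  shows "torus_char L (cyc_shift L j n) y = torus_char L n y * cis (pi * real_of_int (y j) / real L)"
proof -
  define w where "w = (if n j = int L then - y j else 0)"
  have "dotp (freq L (cyc_shift L j n)) y
      = dotp (freq L n) y + pi * real_of_int (y j) / real L + 2 * pi * real_of_int w"
  proof -
    have "freq L (cyc_shift L j n) i * real_of_int (y i)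
        = freq L n i * real_of_int (y i)
          + (if i = j then pi * real_of_int (y j) / real L + 2 * pi * real_of_int w else 0)" for i
      using assms by (auto simp: freq_def cyc_shift_def w_def field_simps)
    then show ?thesis by (simp add: dotp_def sum.distrib)
  qed
  then show ?thesis
    by (simp add: torus_char_def cis_mult[symmetric] add.assoc)
qed

lemma sum_torus_char_eq_0:
  assumes L: "L > 0" and y: "\<not> 2 * int L dvd y j"
  shows "(\<Sum>n\<in>Lam L. torus_char L n y) = 0"
proof -
  define \<zeta> where "\<zeta> = cis (pi * real_of_int (y j) / real L)"
  have "(\<Sum>n\<in>Lam L. torus_char L n y) = (\<Sum>n\<in>Lam L. torus_char L (cyc_shift L j n) y)"
    by (rule sum.reindex_bij_betw[OF bij_cyc_shift, symmetric])
  also have "\<dots> = \<zeta> * (\<Sum>n\<in>Lam L. torus_char L n y)"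
    by (simp add: torus_char_cyc_shift[OF L] \<zeta>_def sum_distrib_right mult.commute)
  finally have "(1 - \<zeta>) * (\<Sum>n\<in>Lam L. torus_char L n y) = 0"
    by (simp add: algebra_simps)
  moreover have "\<zeta> \<noteq> 1"
  proof
    assume "\<zeta> = 1"
    then have "cos (pi * real_of_int (y j) / real L) = 1"
      by (metis \<zeta>_def cis.sel(1) one_complex.sel(1))
    then obtain m :: int where "pi * real_of_int (y j) / real L = real_of_int m * 2 * pi"
      using cos_one_2pi_int by auto
    then have "real_of_int (y j) = real_of_int (2 * int L * m)"
      using L by (simp add: field_simps)
    then have "y j = 2 * int L * m" by linarith
    with y show False by simp
  qed
  ultimately show ?thesis by simp
qed

section \<open>Fourier support of the powers of \<open>\<gamma>\<^sup>2\<close>\<close>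

text \<open>\<open>fourier_supported L N F\<close>: the Fourier transform \<open>y \<mapsto> \<Sum>n. F n * torus_char L n y\<close> of \<open>F\<close>
  vanishes outside the ball of radius \<open>N\<close> for the \<open>2L\<close>-periodic \<open>\<ell>\<^sup>1\<close>-distance.\<close>

definition fourier_supported :: "nat \<Rightarrow> nat \<Rightarrow> (('n::finite \<Rightarrow> int) \<Rightarrow> complex) \<Rightarrow> bool" where
  "fourier_supported L N F \<longleftrightarrow>
     (\<forall>y. (\<forall>q. int N < (\<Sum>j\<in>UNIV. \<bar>y j - 2 * int L * q j\<bar>)) \<longrightarrow>
          (\<Sum>n\<in>Lam L. F n * torus_char L n y) = 0)"

lemma fourier_supported_const:
  assumes "L > 0"
  shows "fourier_supported L 0 (\<lambda>_. a)"
  unfolding fourier_supported_def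
proof (intro allI impI)
  fix y :: "'a \<Rightarrow> int"
  assume far: "\<forall>q. int 0 < (\<Sum>j\<in>UNIV. \<bar>y j - 2 * int L * q j\<bar>)"
  obtain j where "\<not> 2 * int L dvd y j"
  proof (rule ccontr)
    assume "\<not> thesis"
    then have "\<forall>j. 2 * int L dvd y j"
      using that by blast
    then have "(\<Sum>j\<in>UNIV. \<bar>y j - 2 * int L * (y j div (2 * int L))\<bar>) = 0"
      by simp
    with far show False by (metis less_irrefl of_nat_0)
  qed
  then show "(\<Sum>n\<in>Lam L. a * torus_char L n y) = 0"
    by (simp add: sum_distrib_left[symmetric] sum_torus_char_eq_0[OF assms])
qed

lemma fourier_supported_mono:
  "fourier_supported L N F \<Longrightarrow> N \<le> N' \<Longrightarrow> fourier_supported L N' F"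
  unfolding fourier_supported_def by (smt (verit) of_nat_mono)

lemma fourier_supported_scale:
  "fourier_supported L N F \<Longrightarrow> fourier_supported L N (\<lambda>n. a * F n)"
  by (simp add: fourier_supported_def mult.assoc sum_distrib_left[symmetric])

lemma fourier_supported_diff:
  "fourier_supported L N F \<Longrightarrow> fourier_supported L N G \<Longrightarrow> fourier_supported L N (\<lambda>n. F n - G n)"
  by (simp add: fourier_supported_def left_diff_distrib sum_subtractf)

lemma fourier_supported_add:
  "fourier_supported L N F \<Longrightarrow> fourier_supported L N G \<Longrightarrow> fourier_supported L N (\<lambda>n. F n + G n)"
  by (simp add: fourier_supported_def distrib_right sum.distrib)

lemma fourier_supported_sum:
  "finite I \<Longrightarrow> (\<And>i. i \<in> I \<Longrightarrow> fourier_supported L N (F i)) \<Longrightarrow>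
     fourier_supported L N (\<lambda>n. \<Sum>i\<in>I. F i n)"
  by (induction I rule: finite_induct)
    (simp_all add: fourier_supported_add, simp add: fourier_supported_def)

lemma fourier_supported_char_mult:
  assumes F: "fourier_supported L N F"
  shows "fourier_supported L (N + nat (\<Sum>j\<in>UNIV. \<bar>d j\<bar>)) (\<lambda>n. torus_char L n d * F n)"
  unfolding fourier_supported_def
proof (intro allI impI)
  fix y :: "'a \<Rightarrow> int"
  assume far: "\<forall>q. int (N + nat (\<Sum>j\<in>UNIV. \<bar>d j\<bar>)) < (\<Sum>j\<in>UNIV. \<bar>y j - 2 * int L * q j\<bar>)"
  have "int N < (\<Sum>j\<in>UNIV. \<bar>y j + d j - 2 * int L * q j\<bar>)" for q
  proof -
    have "(\<Sum>j\<in>UNIV. \<bar>y j - 2 * int L * q j\<bar>)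
        \<le> (\<Sum>j\<in>UNIV. \<bar>y j + d j - 2 * int L * q j\<bar> + \<bar>d j\<bar>)"
      by (intro sum_mono) linarith
    with far[rule_format, of q] show ?thesis
      by (simp add: sum.distrib sum_nonneg)
  qed
  with F have "(\<Sum>n\<in>Lam L. F n * torus_char L n (\<lambda>j. y j + d j)) = 0"
    by (simp add: fourier_supported_def)
  then show "(\<Sum>n\<in>Lam L. torus_char L n d * F n * torus_char L n y) = 0"
    by (simp add: torus_char_add mult_ac)
qed

definition unit_vec :: "'n \<Rightarrow> 'n \<Rightarrow> int" where
  "unit_vec j = (\<lambda>i. if i = j then 1 else 0)"

lemma l1_unit_vec:
  fixes j :: "'n::finite"
  shows "(\<Sum>i\<in>UNIV. \<bar>unit_vec j i\<bar>) = 1" "(\<Sum>i\<in>UNIV. \<bar>- unit_vec j i\<bar>) = 1"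
  unfolding unit_vec_def by (simp_all add: if_distrib[of abs] if_distrib[of uminus] cong: if_cong)

lemma torus_char_unit_vec:
  "torus_char L n (unit_vec j) = cis (freq L n j)"
  "torus_char L n (\<lambda>i. - unit_vec j i) = cis (- freq L n j)"
  by (simp_all add: torus_char_def dotp_def unit_vec_def if_distrib cong: if_cong)

lemma gam_sq_eq_trig_poly:
  assumes "\<forall>j. lam j \<ge> 0"
  shows "complex_of_real ((gam \<omega> lam (freq L n))\<^sup>2) = complex_of_real (\<omega>\<^sup>2) +
     (\<Sum>j\<in>UNIV. complex_of_real (lam j) *
        (2 - torus_char L n (unit_vec j) - torus_char L n (\<lambda>i. - unit_vec j i)))"
proof -
  have "(gam \<omega> lam (freq L n))\<^sup>2 = \<omega>\<^sup>2 + 4 * (\<Sum>j\<in>UNIV. lam j * (sin (freq L n j / 2))\<^sup>2)"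
    unfolding gam_def using assms by (simp add: sum_nonneg)
  moreover have "2 - cis a - cis (- a) = complex_of_real (4 * (sin (a / 2))\<^sup>2)" for a
    using cos_double_sin[of "a / 2"] by (simp add: complex_eq_iff)
  ultimately show ?thesis
    by (simp add: torus_char_unit_vec sum_distrib_left mult.left_commute)
qed

lemma fourier_supported_gam_sq_power:
  assumes L: "L > 0" and lam: "\<forall>j. lam j \<ge> 0"
  shows "fourier_supported L m (\<lambda>n. complex_of_real ((gam \<omega> lam (freq L n))\<^sup>2) ^ m)"
proof (induction m)
  case 0
  show ?case using fourier_supported_const[OF L, of 1] by simp
next
  case (Suc m)
  define F where "F = (\<lambda>n. complex_of_real ((gam \<omega> lam (freq L n))\<^sup>2) ^ m)"
  have F: "fourier_supported L m F" unfolding F_def by (rule Suc)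
  have shift: "fourier_supported L (Suc m) (\<lambda>n. torus_char L n (unit_vec j) * F n)"
    "fourier_supported L (Suc m) (\<lambda>n. torus_char L n (\<lambda>i. - unit_vec j i) * F n)" for j
    using fourier_supported_char_mult[OF F, of "unit_vec j"]
      fourier_supported_char_mult[OF F, of "\<lambda>i. - unit_vec j i"]
    by (simp_all add: l1_unit_vec)
  have step: "complex_of_real ((gam \<omega> lam (freq L n))\<^sup>2) ^ Suc m = complex_of_real (\<omega>\<^sup>2) * F n +
      (\<Sum>j\<in>UNIV. complex_of_real (lam j) * (2 * F n - torus_char L n (unit_vec j) * F n
         - torus_char L n (\<lambda>i. - unit_vec j i) * F n))" for n
  proof -
    have "complex_of_real ((gam \<omega> lam (freq L n))\<^sup>2) ^ Suc m
        = complex_of_real ((gam \<omega> lam (freq L n))\<^sup>2) * F n"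
      by (simp only: F_def power_Suc)
    also have "\<dots> = (complex_of_real (\<omega>\<^sup>2) + (\<Sum>j\<in>UNIV. complex_of_real (lam j) *
        (2 - torus_char L n (unit_vec j) - torus_char L n (\<lambda>i. - unit_vec j i)))) * F n"
      by (simp only: gam_sq_eq_trig_poly[OF lam])
    finally show ?thesis by (simp add: algebra_simps sum_distrib_left)
  qed
  have "fourier_supported L (Suc m) (\<lambda>n. complex_of_real (\<omega>\<^sup>2) * F n +
      (\<Sum>j\<in>UNIV. complex_of_real (lam j) * (2 * F n - torus_char L n (unit_vec j) * F n
         - torus_char L n (\<lambda>i. - unit_vec j i) * F n)))"
    using fourier_supported_mono[OF F, of "Suc m"] shift
    by (intro fourier_supported_add fourier_supported_sum fourier_supported_scale
        fourier_supported_diff) auto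
  then show ?case
    by (simp only: step)
qed

lemma abs_le_abs_diff_mult:
  fixes a q :: int
  assumes "- int L < a" "a \<le> int L"
  shows "\<bar>a\<bar> \<le> \<bar>a - 2 * int L * q\<bar>"
proof -
  consider "q = 0" | "q \<ge> 1" | "q \<le> -1" by linarith
  then show ?thesis
  proof cases
    case 2
    then have "int L \<le> int L * q" using mult_left_mono[of 1 q "int L"] by simp
    then show ?thesis using assms by linarith
  next
    case 3
    then have "int L * q \<le> - int L" using mult_left_mono[of q "-1" "int L"] by simp
    then show ?thesis using assms by linarith
  qed simp
qed

lemma sum_gam_power_cos_eq_0:
  assumes L: "L > 0" and lam: "\<forall>j. lam j \<ge> 0" and x: "x \<in> Lam L"
    and m: "real m < l1norm x"
  shows "(\<Sum>n\<in>Lam L. gam \<omega> lam (freq L n) ^ (2 * m) * cos (dotp (freq L n) x)) = 0"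
proof -
  have "int m < (\<Sum>j\<in>UNIV. \<bar>x j - 2 * int L * q j\<bar>)" for q
  proof -
    have "(\<Sum>j\<in>UNIV. \<bar>x j\<bar>) \<le> (\<Sum>j\<in>UNIV. \<bar>x j - 2 * int L * q j\<bar>)"
      using x by (intro sum_mono abs_le_abs_diff_mult) (auto dest: in_LamD)
    moreover have "real m < real_of_int (\<Sum>j\<in>UNIV. \<bar>x j\<bar>)"
      using m by (simp add: l1norm_def)
    ultimately show ?thesis by linarith
  qed
  with fourier_supported_gam_sq_power[OF L lam, of m \<omega>]
  have "(\<Sum>n\<in>Lam L. complex_of_real ((gam \<omega> lam (freq L n))\<^sup>2) ^ m * torus_char L n x) = 0"
    unfolding fourier_supported_def by blast
  then have "Re (\<Sum>n\<in>Lam L. complex_of_real ((gam \<omega> lam (freq L n))\<^sup>2) ^ m * torus_char L n x) = 0"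
    by simp
  then show ?thesis
    by (simp add: torus_char_def power_mult of_real_power[symmetric] del: of_real_power)
qed

section \<open>Reduction to real cosine sums\<close>

text \<open>Negation on the discrete torus, with representatives in \<open>(-L, L]\<close>.\<close>

definition reflect :: "nat \<Rightarrow> ('n \<Rightarrow> int) \<Rightarrow> 'n \<Rightarrow> int" where
  "reflect L n = (\<lambda>j. if n j = int L then int L else - n j)"

lemma reflect_reflect: "n \<in> Lam L \<Longrightarrow> reflect L (reflect L n) = n"
proof
  fix j assume "n \<in> Lam L"
  then show "reflect L (reflect L n) j = n j"
    using in_LamD[of n L j] by (auto simp: reflect_def)
qed

lemma reflect_in_Lam: "n \<in> Lam L \<Longrightarrow> reflect L n \<in> Lam L"
  unfolding Lam_def reflect_def using in_LamD[of n L] by (smt (verit) mem_Collect_eq)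

lemma bij_reflect: "bij_betw (reflect L) (Lam L) (Lam L)"
  by (rule bij_betw_byWitness[where f'="reflect L"]) (auto simp: reflect_reflect reflect_in_Lam)

lemma freq_reflect: "freq L (reflect L n) j = (if n j = int L then freq L n j else - freq L n j)"
  by (simp add: freq_def reflect_def)

lemma gam_freq_reflect: "gam \<omega> lam (freq L (reflect L n)) = gam \<omega> lam (freq L n)"
proof -
  have "(sin (freq L (reflect L n) j / 2))\<^sup>2 = (sin (freq L n j / 2))\<^sup>2" for j
    by (simp add: freq_reflect)
  then show ?thesis by (simp add: gam_def)
qed

lemma sin_dotp_freq_reflect:
  assumes "L > 0"
  shows "sin (dotp (freq L (reflect L n)) x) = - sin (dotp (freq L n) x)"
proof -
  define m where "m = (\<Sum>j\<in>UNIV. if n j = int L then x j else 0)"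
  have "freq L (reflect L n) j * real_of_int (x j)
      = - (freq L n j * real_of_int (x j)) + 2 * pi * real_of_int (if n j = int L then x j else 0)" for j
    using assms by (simp add: freq_reflect) (simp add: freq_def)
  then have "dotp (freq L (reflect L n)) x = - dotp (freq L n) x + 2 * pi * real_of_int m"
    by (simp add: dotp_def m_def sum_subtractf sum_distrib_left sum_negf)
  then show ?thesis
    by (simp add: sin_diff)
qed

lemma sum_sin_dotp_eq_0:
  assumes "L > 0"
  shows "(\<Sum>n\<in>Lam L. \<psi> (gam \<omega> lam (freq L n)) * sin (dotp (freq L n) x)) = 0"
proof -
  let ?S = "\<Sum>n\<in>Lam L. \<psi> (gam \<omega> lam (freq L n)) * sin (dotp (freq L n) x)"
  have "?S = (\<Sum>n\<in>Lam L. \<psi> (gam \<omega> lam (freq L (reflect L n))) * sin (dotp (freq L (reflect L n)) x))"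
    by (rule sum.reindex_bij_betw[OF bij_reflect, symmetric])
  also have "\<dots> = - ?S"
    by (simp add: gam_freq_reflect sin_dotp_freq_reflect[OF assms] sum_negf)
  finally show ?thesis by simp
qed

lemma avg_eq_sum_Lam:
  fixes x :: "'n::finite \<Rightarrow> int"
  assumes L: "L > 0"
  shows "avg \<omega> lam L g t x = complex_of_real (1 / real (card (Lam L :: ('n \<Rightarrow> int) set))) *
     (\<Sum>n\<in>Lam L. complex_of_real (g (freq L n)) *
        cis (dotp (freq L n) x - 2 * gam \<omega> lam (freq L n) * t))"
proof -
  have inj: "inj_on (freq L) (Lam L :: ('n \<Rightarrow> int) set)"
    using L by (auto simp: inj_on_def freq_def fun_eq_iff)
  have Lam_star: "Lam_star L = freq L ` (Lam L :: ('n \<Rightarrow> int) set)"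
    unfolding Lam_star_def freq_def ..
  have "exp (\<i> * complex_of_real a - 2 * \<i> * complex_of_real b * complex_of_real t)
      = cis (a - 2 * b * t)" for a b
    by (simp add: cis_conv_exp algebra_simps)
  then show ?thesis
    unfolding avg_def Lam_star sum.reindex[OF inj] by simp
qed

definition gam_cos_sum :: "real \<Rightarrow> ('n::finite \<Rightarrow> real) \<Rightarrow> nat \<Rightarrow> (real \<Rightarrow> real) \<Rightarrow> ('n \<Rightarrow> int) \<Rightarrow> real" where
  "gam_cos_sum \<omega> lam L \<phi> x = (\<Sum>n\<in>Lam L. \<phi> (gam \<omega> lam (freq L n)) * cos (dotp (freq L n) x))"

lemma Re_avg_one:
  fixes x :: "'n::finite \<Rightarrow> int"
  assumes L: "L > 0"
  shows "Re (avg \<omega> lam L (\<lambda>k. 1) t x) =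
    gam_cos_sum \<omega> lam L (\<lambda>g. cos (2 * g * t)) x / real (card (Lam L :: ('n \<Rightarrow> int) set))"
proof -
  have "(\<Sum>n\<in>Lam L. cos (dotp (freq L n) x - 2 * gam \<omega> lam (freq L n) * t))
      = (\<Sum>n\<in>Lam L. cos (2 * gam \<omega> lam (freq L n) * t) * cos (dotp (freq L n) x))
        + (\<Sum>n\<in>Lam L. sin (2 * gam \<omega> lam (freq L n) * t) * sin (dotp (freq L n) x))"
    by (simp add: cos_diff sum.distrib mult.commute)
  also have "(\<Sum>n\<in>Lam L. sin (2 * gam \<omega> lam (freq L n) * t) * sin (dotp (freq L n) x)) = 0"
    using sum_sin_dotp_eq_0[OF L, where \<psi>="\<lambda>g. sin (2 * g * t)" and \<omega>=\<omega> and lam=lam and x=x] by simp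
  finally show ?thesis by (simp add: avg_eq_sum_Lam[OF L] gam_cos_sum_def)
qed

lemma Im_avg_gam_plus:
  fixes x :: "'n::finite \<Rightarrow> int"
  assumes L: "L > 0"
  shows "Im (avg \<omega> lam L (\<lambda>k. gam \<omega> lam k + s / gam \<omega> lam k) t x) =
    - (gam_cos_sum \<omega> lam L (\<lambda>g. g * sin (2 * g * t)) x
       + s * gam_cos_sum \<omega> lam L (\<lambda>g. sin (2 * g * t) / g) x)
     / real (card (Lam L :: ('n \<Rightarrow> int) set))"
proof -
  define g where "g n = gam \<omega> lam (freq L n)" for n
  have "(\<Sum>n\<in>Lam L. (g n + s / g n) * sin (dotp (freq L n) x - 2 * g n * t))
      = (\<Sum>n\<in>Lam L. (g n + s / g n) * cos (2 * g n * t) * sin (dotp (freq L n) x))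
        - (\<Sum>n\<in>Lam L. (g n + s / g n) * sin (2 * g n * t) * cos (dotp (freq L n) x))"
    by (simp add: sin_diff sum_subtractf algebra_simps)
  also have "(\<Sum>n\<in>Lam L. (g n + s / g n) * cos (2 * g n * t) * sin (dotp (freq L n) x)) = 0"
    using sum_sin_dotp_eq_0[OF L, where \<psi>="\<lambda>g. (g + s / g) * cos (2 * g * t)" and \<omega>=\<omega> and lam=lam and x=x]
    by (simp add: g_def)
  also have "(\<Sum>n\<in>Lam L. (g n + s / g n) * sin (2 * g n * t) * cos (dotp (freq L n) x))
      = (\<Sum>n\<in>Lam L. g n * sin (2 * g n * t) * cos (dotp (freq L n) x))
        + s * (\<Sum>n\<in>Lam L. sin (2 * g n * t) / g n * cos (dotp (freq L n) x))"
    by (simp add: sum.distrib sum_distrib_left algebra_simps)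
  finally show ?thesis by (simp add: avg_eq_sum_Lam[OF L] g_def gam_cos_sum_def)
qed

section \<open>Exponential bounds from vanishing moments\<close>

lemma abs_sums_le_exp_tail:
  fixes f :: "nat \<Rightarrow> real"
  assumes f: "f sums s" and head: "\<And>k. k < p \<Longrightarrow> f k = 0"
    and bound: "\<And>k. \<bar>f k\<bar> \<le> A * z ^ k / fact k" and \<beta>: "\<beta> \<ge> 1" and z: "z \<ge> 0"
  shows "\<bar>s\<bar> \<le> A * exp (\<beta> * z) / \<beta> ^ p"
proof -
  have A: "A \<ge> 0" using bound[of 0] by simp
  have "norm (f k) \<le> A / \<beta> ^ p * ((\<beta> * z) ^ k /\<^sub>R fact k)" for k
  proof (cases "k < p")
    case True
    then show ?thesis using head A \<beta> z by simp
  next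
    case False
    have "\<beta> ^ p * z ^ k \<le> \<beta> ^ k * z ^ k"
      using False \<beta> z by (intro mult_right_mono power_increasing) auto
    then have "A * z ^ k / fact k \<le> A / \<beta> ^ p * ((\<beta> * z) ^ k /\<^sub>R fact k)"
      using A \<beta> by (simp add: field_simps mult_left_mono)
    then show ?thesis using bound[of k] by simp
  qed
  from norm_sums_le[OF f sums_mult[OF exp_converges] this]
  show ?thesis by simp
qed

lemma exp_mult_pow_le:
  fixes z u :: real
  assumes p: "p \<ge> 1" and u: "0 < u" "u \<le> exp (-1)" and z: "0 < z" "z < u * p"
  shows "exp p * (z / p) ^ p \<le> exp (z - u * p)"
proof -
  define r where "r = z / p"
  have p0: "real p > 0" using p by simp
  have r: "0 < r" "r < u" using z p0 by (auto simp: r_def field_simps)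
  have u1: "u \<le> 1" using u(2) by (meson exp_le_one_iff le_minus_one_simps(1) order.trans)
  have "ln u \<le> -1" using u by (metis ln_exp ln_le_cancel_iff exp_gt_zero)
  moreover have "ln (r / u) \<le> r / u - 1" using r u by (intro ln_le_minus_one) auto
  moreover have "ln r = ln u + ln (r / u)" using r u by (simp add: ln_div)
  moreover have "r / u - 1 \<le> r - u"
  proof -
    have "r * (1 - u) \<le> u * (1 - u)" using r u1 by (intro mult_right_mono) auto
    then show ?thesis using u by (simp add: field_simps)
  qed
  ultimately have "1 + ln r \<le> r - u" by linarith
  have "exp p * (z / p) ^ p = exp (p * (1 + ln r))"
    using r by (simp add: r_def exp_add distrib_left exp_of_nat_mult ln_realpow[symmetric])
  also have "\<dots> \<le> exp (p * (r - u))"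
    using \<open>1 + ln r \<le> r - u\<close> p0 by (intro exp_mono mult_left_mono) auto
  also have "p * (r - u) = z - u * p" using p0 by (simp add: r_def field_simps)
  finally show ?thesis .
qed

lemma exp_div_pow_exp_half_le:
  fixes \<mu> z Q :: real
  assumes z: "z \<ge> 0" and large: "\<mu> * exp 1 \<ge> 2 \<or> z = 0" and Qe: "Q \<ge> \<mu> * exp (\<mu> / 2 + 1)"
  shows "exp (exp (\<mu> / 2) * z) / exp (\<mu> / 2) ^ p \<le> exp ((Q * z - \<mu> * p) / 2)"
proof -
  define b where "b = exp (\<mu> / 2)"
  have "b * z \<le> Q * z / 2"
  proof (cases "z = 0")
    case False
    with large have "2 * b \<le> \<mu> * exp 1 * b" by (simp add: b_def)
    also have "\<dots> \<le> Q" using Qe by (simp add: b_def exp_add mult_ac)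
    finally have "2 * b * z \<le> Q * z" using z by (rule mult_right_mono)
    then show ?thesis by simp
  qed simp
  moreover have "b ^ p = exp (\<mu> * p / 2)"
    by (simp add: b_def exp_of_nat_mult[symmetric] mult_ac)
  ultimately show ?thesis
    by (simp add: b_def[symmetric] exp_diff[symmetric] diff_divide_distrib)
qed

text \<open>Optimising over \<open>\<beta>\<close>: \<open>\<beta> = exp (\<mu> / 2)\<close> when \<open>\<mu>\<close> is large, and otherwise the Chernoff-type choice
  \<open>\<beta> = p / z\<close> as long as \<open>z < \<mu> p / 2\<close>.\<close>

lemma le_exp_of_le_exp_div_pow:
  fixes \<mu> z Q A S :: real
  assumes \<mu>: "\<mu> > 0" and z: "z \<ge> 0" and Q2: "Q \<ge> 2" and Qe: "Q \<ge> \<mu> * exp (\<mu> / 2 + 1)"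
    and S: "0 \<le> S" "S \<le> A" and H: "\<And>\<beta>. \<beta> \<ge> 1 \<Longrightarrow> S \<le> A * exp (\<beta> * z) / \<beta> ^ p"
  shows "S \<le> A * exp ((Q * z - \<mu> * p) / 2)"
proof -
  have A: "A \<ge> 0" using S by simp
  have Qz: "z \<le> Q * z / 2" using mult_right_mono[OF Q2 z] by simp
  consider "\<mu> * exp 1 \<ge> 2 \<or> z = 0" | "\<mu> * exp 1 < 2" "z > 0" "z < \<mu> / 2 * p"
    | "\<mu> * p / 2 \<le> z" using z by fastforce
  then show ?thesis
  proof cases
    case 1
    have "S \<le> A * (exp (exp (\<mu> / 2) * z) / exp (\<mu> / 2) ^ p)" using H \<mu> by simp
    also have "\<dots> \<le> A * exp ((Q * z - \<mu> * p) / 2)"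
      using exp_div_pow_exp_half_le[OF z 1 Qe] A by (rule mult_left_mono)
    finally show ?thesis .
  next
    case 2
    then have p: "p \<ge> 1" using \<mu> by (cases p) auto
    have "\<mu> * 1 \<le> \<mu> * exp 1" using \<mu> by (intro mult_left_mono) auto
    then have "\<mu> / 2 * p \<le> 1 * real p" using 2 by (intro mult_right_mono) auto
    then have "p / z \<ge> 1" using 2 by simp
    from H[OF this] have "S \<le> A * (exp p * (z / p) ^ p)"
      using 2 p by (simp add: field_simps)
    also have "\<dots> \<le> A * exp (z - \<mu> / 2 * p)"
      using 2 \<mu> by (intro mult_left_mono A exp_mult_pow_le p) (auto simp: exp_minus field_simps)
    also have "\<dots> \<le> A * exp ((Q * z - \<mu> * p) / 2)"
      using Qz A by (intro mult_left_mono) auto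
    finally show ?thesis .
  next
    case 3
    then have "1 \<le> exp ((Q * z - \<mu> * p) / 2)" using Qz by simp
    then have "A * 1 \<le> A * exp ((Q * z - \<mu> * p) / 2)" using A by (rule mult_left_mono)
    then show ?thesis using S by simp
  qed
qed

lemma abs_le_exp_div_of_deriv_bound:
  fixes f f' :: "real \<Rightarrow> real"
  assumes D: "\<And>s. (f has_real_derivative f' s) (at s)" and f0: "f 0 = 0"
    and B: "\<And>s. \<bar>f' s\<bar> \<le> K * exp (R * \<bar>s\<bar>)" and R: "R > 0"
  shows "\<bar>f t\<bar> \<le> K * exp (R * \<bar>t\<bar>) / R"
proof -
  have K: "K \<ge> 0" using B[of 0] abs_ge_zero[of "f' 0"] by simp
  have nonneg_case: "\<bar>g t\<bar> \<le> K * exp (R * t) / R"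
    if t: "t \<ge> 0" and Dg: "\<And>s. (g has_real_derivative g' s) (at s)" and g0: "g 0 = 0"
      and Bg: "\<And>s. \<bar>g' s\<bar> \<le> K * exp (R * \<bar>s\<bar>)" for g g' t
  proof -
    have "\<sigma> * g t \<le> K * exp (R * t) / R" if \<sigma>: "\<bar>\<sigma>\<bar> = 1" for \<sigma>
    proof -
      define \<phi> where "\<phi> s = K * exp (R * s) / R - \<sigma> * g s" for s
      have "\<phi> 0 \<le> \<phi> t"
      proof (rule DERIV_nonneg_imp_nondecreasing[OF t])
        fix s :: real assume "0 \<le> s"
        have "(\<phi> has_real_derivative K * exp (R * s) - \<sigma> * g' s) (at s)"
          unfolding \<phi>_def using R by (auto intro!: derivative_eq_intros Dg)
        moreover have "\<sigma> * g' s \<le> K * exp (R * s)"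
          using Bg[of s] \<sigma> \<open>0 \<le> s\<close> abs_ge_self[of "\<sigma> * g' s"] by (simp add: abs_mult)
        ultimately show "\<exists>y. (\<phi> has_real_derivative y) (at s) \<and> 0 \<le> y" by auto
      qed
      moreover have "0 \<le> K / R" using K R by simp
      ultimately show ?thesis by (simp add: \<phi>_def g0)
    qed
    from this[of 1] this[of "-1"] show ?thesis by linarith
  qed
  show ?thesis
  proof (cases "t \<ge> 0")
    case True
    then show ?thesis using nonneg_case[OF True D f0 B] by simp
  next
    case False
    have "\<bar>f (- (- t))\<bar> \<le> K * exp (R * (- t)) / R"
      using False by (intro nonneg_case[where g'="\<lambda>s. - f' (- s)"])
        (auto simp: f0 DERIV_mirror[symmetric] D intro: B[of "- _", simplified])
    then show ?thesis using False by simp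
  qed
qed

locale vanishing_moments =
  fixes I :: "'a set" and G C :: "'a \<Rightarrow> real" and c :: real and X :: nat
  assumes finite_I: "finite I"
    and G_pos: "\<And>i. i \<in> I \<Longrightarrow> 0 < G i" and G_le: "\<And>i. i \<in> I \<Longrightarrow> G i \<le> c"
    and abs_C_le: "\<And>i. i \<in> I \<Longrightarrow> \<bar>C i\<bar> \<le> 1"
    and even_moments_eq_0: "\<And>m. m < X \<Longrightarrow> (\<Sum>i\<in>I. G i ^ (2 * m) * C i) = 0"
    and c_pos: "c > 0"
begin

lemma abs_moment_le: "\<bar>\<Sum>i\<in>I. G i ^ k * C i\<bar> \<le> card I * c ^ k"
proof -
  have "\<bar>\<Sum>i\<in>I. G i ^ k * C i\<bar> \<le> (\<Sum>i\<in>I. c ^ k * 1)"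
  proof (rule order.trans[OF sum_abs sum_mono])
    fix i assume i: "i \<in> I"
    have "\<bar>G i ^ k * C i\<bar> = G i ^ k * \<bar>C i\<bar>" using G_pos[OF i] by (simp add: abs_mult)
    also have "\<dots> \<le> c ^ k * 1" using G_pos[OF i] G_le[OF i] abs_C_le[OF i]
      by (intro mult_mono power_mono) auto
    finally show "\<bar>G i ^ k * C i\<bar> \<le> c ^ k * 1" .
  qed
  then show ?thesis by simp
qed

lemma abs_sum_cos_le:
  assumes "\<beta> \<ge> 1"
  shows "\<bar>\<Sum>i\<in>I. cos (2 * G i * t) * C i\<bar> \<le> card I * exp (\<beta> * (2 * c * \<bar>t\<bar>)) / \<beta> ^ (2 * X)"
proof (rule abs_sums_le_exp_tail[OF _ _ _ assms])
  show "(\<lambda>k. cos_coeff k * (2 * t) ^ k * (\<Sum>i\<in>I. G i ^ k * C i)) sums (\<Sum>i\<in>I. cos (2 * G i * t) * C i)"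
  proof -
    have "(\<lambda>k. cos_coeff k * (2 * G i * t) ^ k * C i) sums (cos (2 * G i * t) * C i)" for i
      using sums_mult2[OF cos_converges, of "2 * G i * t" "C i"] by simp
    then have "(\<lambda>k. \<Sum>i\<in>I. cos_coeff k * (2 * G i * t) ^ k * C i) sums (\<Sum>i\<in>I. cos (2 * G i * t) * C i)"
      by (rule sums_sum)
    then show ?thesis by (simp add: sum_distrib_left power_mult_distrib mult_ac)
  qed
  show "cos_coeff k * (2 * t) ^ k * (\<Sum>i\<in>I. G i ^ k * C i) = 0" if "k < 2 * X" for k
    using that even_moments_eq_0[of "k div 2"] by (cases "even k") (auto simp: cos_coeff_def)
  show "\<bar>cos_coeff k * (2 * t) ^ k * (\<Sum>i\<in>I. G i ^ k * C i)\<bar> \<le> card I * (2 * c * \<bar>t\<bar>) ^ k / fact k" for k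
  proof -
    have "\<bar>cos_coeff k\<bar> \<le> 1 / fact k" by (simp add: cos_coeff_def)
    then have "\<bar>cos_coeff k * (2 * t) ^ k * (\<Sum>i\<in>I. G i ^ k * C i)\<bar> \<le> 1 / fact k * (2 * \<bar>t\<bar>) ^ k * (card I * c ^ k)"
      unfolding abs_mult power_abs by (intro mult_mono abs_moment_le) auto
    then show ?thesis by (simp add: power_mult_distrib mult_ac)
  qed
qed (simp add: less_imp_le[OF c_pos])

lemma abs_sum_G_sin_le:
  assumes "\<beta> \<ge> 1"
  shows "\<bar>\<Sum>i\<in>I. G i * sin (2 * G i * t) * C i\<bar>
    \<le> card I * c * exp (\<beta> * (2 * c * \<bar>t\<bar>)) / \<beta> ^ (2 * X - 1)"
proof (rule abs_sums_le_exp_tail[OF _ _ _ assms])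
  show "(\<lambda>k. sin_coeff k * (2 * t) ^ k * (\<Sum>i\<in>I. G i ^ Suc k * C i))
      sums (\<Sum>i\<in>I. G i * sin (2 * G i * t) * C i)"
  proof -
    have "(\<lambda>k. sin_coeff k * (2 * G i * t) ^ k * (G i * C i)) sums (sin (2 * G i * t) * (G i * C i))" for i
      using sums_mult2[OF sin_converges, of "2 * G i * t" "G i * C i"] by simp
    then have "(\<lambda>k. \<Sum>i\<in>I. sin_coeff k * (2 * G i * t) ^ k * (G i * C i))
        sums (\<Sum>i\<in>I. sin (2 * G i * t) * (G i * C i))"
      by (rule sums_sum)
    then show ?thesis by (simp add: sum_distrib_left power_mult_distrib mult_ac)
  qed
  show "sin_coeff k * (2 * t) ^ k * (\<Sum>i\<in>I. G i ^ Suc k * C i) = 0" if "k < 2 * X - 1" for k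
    using that even_moments_eq_0[of "Suc k div 2"] by (cases "even k") (auto simp: sin_coeff_def elim!: oddE)
  show "\<bar>sin_coeff k * (2 * t) ^ k * (\<Sum>i\<in>I. G i ^ Suc k * C i)\<bar>
      \<le> card I * c * (2 * c * \<bar>t\<bar>) ^ k / fact k" for k
  proof -
    have "\<bar>sin_coeff k\<bar> \<le> 1 / fact k" by (simp add: sin_coeff_def)
    then have "\<bar>sin_coeff k * (2 * t) ^ k * (\<Sum>i\<in>I. G i ^ Suc k * C i)\<bar>
        \<le> 1 / fact k * (2 * \<bar>t\<bar>) ^ k * (card I * c ^ Suc k)"
      unfolding abs_mult power_abs by (intro mult_mono abs_moment_le) auto
    then show ?thesis by (simp add: power_mult_distrib mult_ac)
  qed
qed (simp add: less_imp_le[OF c_pos])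

lemma abs_sum_le_card:
  fixes f :: "'a \<Rightarrow> real" and b :: real
  assumes "\<And>i. i \<in> I \<Longrightarrow> \<bar>f i\<bar> \<le> b"
  shows "\<bar>\<Sum>i\<in>I. f i * C i\<bar> \<le> card I * b"
proof -
  have "\<bar>\<Sum>i\<in>I. f i * C i\<bar> \<le> (\<Sum>i\<in>I. b * 1)"
  proof (rule order.trans[OF sum_abs sum_mono])
    fix i assume "i \<in> I"
    then show "\<bar>f i * C i\<bar> \<le> b * 1"
      unfolding abs_mult using assms abs_C_le by (intro mult_mono) (auto intro: order.trans[OF abs_ge_zero])
  qed
  then show ?thesis by simp
qed

context
  fixes \<mu> Q :: real
  assumes \<mu>: "\<mu> > 0" and Q: "Q \<ge> 2" "Q \<ge> \<mu> * exp (\<mu> / 2 + 1)"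
begin

lemma abs_sum_cos_decay:
  "\<bar>\<Sum>i\<in>I. cos (2 * G i * t) * C i\<bar> \<le> card I * exp (Q * c * \<bar>t\<bar> - \<mu> * X)"
proof -
  have "\<bar>\<Sum>i\<in>I. cos (2 * G i * t) * C i\<bar> \<le> card I * exp ((Q * (2 * c * \<bar>t\<bar>) - \<mu> * real (2 * X)) / 2)"
    using c_pos abs_sum_le_card[of "\<lambda>i. cos (2 * G i * t)" 1]
    by (intro le_exp_of_le_exp_div_pow[OF \<mu> _ Q] abs_sum_cos_le) auto
  also have "(Q * (2 * c * \<bar>t\<bar>) - \<mu> * real (2 * X)) / 2 = Q * c * \<bar>t\<bar> - \<mu> * X"
    by (simp add: field_simps)
  finally show ?thesis .
qed

lemma abs_sum_G_sin_decay:
  "\<bar>\<Sum>i\<in>I. G i * sin (2 * G i * t) * C i\<bar> \<le> card I * c * exp (\<mu> / 2) * exp (Q * c * \<bar>t\<bar> - \<mu> * X)"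
proof -
  have "\<bar>\<Sum>i\<in>I. G i * sin (2 * G i * t) * C i\<bar> \<le> card I * c"
  proof (rule abs_sum_le_card)
    fix i assume i: "i \<in> I"
    have "\<bar>G i * sin (2 * G i * t)\<bar> \<le> G i * 1"
      unfolding abs_mult using G_pos[OF i] by (intro mult_mono) auto
    then show "\<bar>G i * sin (2 * G i * t)\<bar> \<le> c" using G_le[OF i] by simp
  qed
  then have "\<bar>\<Sum>i\<in>I. G i * sin (2 * G i * t) * C i\<bar>
      \<le> card I * c * exp ((Q * (2 * c * \<bar>t\<bar>) - \<mu> * real (2 * X - 1)) / 2)"
    using c_pos by (intro le_exp_of_le_exp_div_pow[OF \<mu> _ Q] abs_sum_G_sin_le) auto
  also have "\<dots> \<le> card I * c * (exp (\<mu> / 2) * exp (Q * c * \<bar>t\<bar> - \<mu> * X))"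
  proof -
    have "2 * real X - 1 \<le> real (2 * X - 1)" by linarith
    then have "\<mu> * (2 * real X - 1) \<le> \<mu> * real (2 * X - 1)" using \<mu> by (intro mult_left_mono) auto
    then have "(Q * (2 * c * \<bar>t\<bar>) - \<mu> * real (2 * X - 1)) / 2 \<le> \<mu> / 2 + (Q * c * \<bar>t\<bar> - \<mu> * X)"
      by (simp add: field_simps)
    then have "exp ((Q * (2 * c * \<bar>t\<bar>) - \<mu> * real (2 * X - 1)) / 2)
        \<le> exp (\<mu> / 2) * exp (Q * c * \<bar>t\<bar> - \<mu> * X)"
      by (simp add: exp_add[symmetric])
    then show ?thesis using c_pos by (intro mult_left_mono) auto
  qed
  finally show ?thesis by (simp add: mult_ac)
qed

text \<open>The a-priori bound \<open>S \<le> A\<close> required by \<open>le_exp_of_le_exp_div_pow\<close> fails here (\<open>1 / G i\<close> may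
  exceed \<open>1 / c\<close>), so instead the cosine bound is integrated in \<open>t\<close>.\<close>

lemma abs_sum_sin_div_G_decay:
  "\<bar>\<Sum>i\<in>I. sin (2 * G i * t) / G i * C i\<bar> \<le> card I / c * exp (Q * c * \<bar>t\<bar> - \<mu> * X)"
proof -
  define f where "f s = (\<Sum>i\<in>I. sin (2 * G i * s) / G i * C i)" for s
  define f' where "f' s = 2 * (\<Sum>i\<in>I. cos (2 * G i * s) * C i)" for s
  have "(f has_real_derivative f' s) (at s)" for s
  proof -
    have eq: "cos (2 * G i * s) * (2 * G i) / G i * C i = 2 * (cos (2 * G i * s) * C i)"
      if "i \<in> I" for i
      using G_pos[OF that] by (simp add: field_simps)
    have "(f has_real_derivative (\<Sum>i\<in>I. cos (2 * G i * s) * (2 * G i) / G i * C i)) (at s)"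
      unfolding f_def by (rule DERIV_sum) (auto intro!: derivative_eq_intros)
    moreover have "(\<Sum>i\<in>I. cos (2 * G i * s) * (2 * G i) / G i * C i) = f' s"
      unfolding f'_def sum_distrib_left by (rule sum.cong[OF refl]) (rule eq)
    ultimately show ?thesis by simp
  qed
  moreover have "\<bar>f' s\<bar> \<le> 2 * card I * exp (- \<mu> * X) * exp (Q * c * \<bar>s\<bar>)" for s
    using abs_sum_cos_decay[of s] by (simp add: f'_def abs_mult exp_diff exp_minus field_simps)
  moreover have "f 0 = 0" by (simp add: f_def)
  moreover have "Q * c > 0" using Q c_pos by simp
  ultimately have "\<bar>f t\<bar> \<le> 2 * card I * exp (- \<mu> * X) * exp (Q * c * \<bar>t\<bar>) / (Q * c)"
    by (intro abs_le_exp_div_of_deriv_bound) auto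
  also have "\<dots> \<le> card I / c * exp (Q * c * \<bar>t\<bar> - \<mu> * X)"
  proof -
    have "2 * (card I * exp (Q * c * \<bar>t\<bar>)) \<le> Q * (card I * exp (Q * c * \<bar>t\<bar>))"
      using Q by (intro mult_right_mono) auto
    then show ?thesis using Q c_pos by (simp add: exp_diff exp_minus field_simps)
  qed
  finally show ?thesis by (simp add: f_def)
qed

end

end

section \<open>Decay of \<open>h1\<close> and \<open>h2\<close>\<close>

lemma gam_pos_le_c_wl:
  assumes "\<omega> > 0" and "\<forall>j. lam j \<ge> 0"
  shows "0 < gam \<omega> lam k" "gam \<omega> lam k \<le> c_wl \<omega> lam"
proof -
  have "0 \<le> (\<Sum>j\<in>UNIV. lam j * (sin (k j / 2))\<^sup>2)"
    using assms by (intro sum_nonneg) auto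
  then show "0 < gam \<omega> lam k" using assms by (simp add: gam_def add_pos_nonneg)
  have "(\<Sum>j\<in>UNIV. lam j * (sin (k j / 2))\<^sup>2) \<le> (\<Sum>j\<in>UNIV. lam j * 1)"
    using assms by (intro sum_mono mult_left_mono) (auto simp: abs_square_le_1)
  then show "gam \<omega> lam k \<le> c_wl \<omega> lam" by (simp add: gam_def c_wl_def)
qed

lemma c_wl_pos: "\<omega> > 0 \<Longrightarrow> \<forall>j. lam j \<ge> 0 \<Longrightarrow> c_wl \<omega> lam > 0"
  using gam_pos_le_c_wl by (meson less_le_trans)

lemma vanishing_moments_lattice:
  assumes \<omega>: "\<omega> > 0" and lam: "\<forall>j. lam j \<ge> 0" and L: "L > 0" and x: "x \<in> Lam L"
  shows "vanishing_moments (Lam L) (\<lambda>n. gam \<omega> lam (freq L n)) (\<lambda>n. cos (dotp (freq L n) x))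
    (c_wl \<omega> lam) (nat (\<Sum>j\<in>UNIV. \<bar>x j\<bar>))"
proof
  have l1: "l1norm x = real (nat (\<Sum>j\<in>UNIV. \<bar>x j\<bar>))"
    by (simp add: l1norm_def sum_nonneg)
  show "(\<Sum>n\<in>Lam L. gam \<omega> lam (freq L n) ^ (2 * m) * cos (dotp (freq L n) x)) = 0"
    if "m < nat (\<Sum>j\<in>UNIV. \<bar>x j\<bar>)" for m
    using that by (intro sum_gam_power_cos_eq_0[OF L lam x]) (simp only: l1 of_nat_less_iff)
qed (use gam_pos_le_c_wl[OF \<omega> lam] c_wl_pos[OF \<omega> lam] finite_Lam in auto)

context
  fixes \<omega> \<mu> t :: real and lam :: "'n::finite \<Rightarrow> real" and L :: nat and x :: "'n \<Rightarrow> int"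
  assumes \<omega>: "\<omega> > 0" and lam: "\<forall>j. lam j \<ge> 0" and L: "L > 0" and \<mu>: "\<mu> > 0" and x: "x \<in> Lam L"
begin

abbreviation (input) decay :: real where
  "decay \<equiv> exp (- \<mu> * (l1norm x - c_wl \<omega> lam * max (2 / \<mu>) (exp (\<mu> / 2 + 1)) * \<bar>t\<bar>))"

lemma abs_gam_cos_sum_le:
  defines "N \<equiv> real (card (Lam L :: ('n \<Rightarrow> int) set))" and "c \<equiv> c_wl \<omega> lam"
  shows "\<bar>gam_cos_sum \<omega> lam L (\<lambda>g. cos (2 * g * t)) x\<bar> \<le> N * decay"
    and "\<bar>gam_cos_sum \<omega> lam L (\<lambda>g. g * sin (2 * g * t)) x\<bar> \<le> N * c * exp (\<mu> / 2) * decay"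
    and "\<bar>gam_cos_sum \<omega> lam L (\<lambda>g. sin (2 * g * t) / g) x\<bar> \<le> N / c * decay"
proof -
  define X where "X = nat (\<Sum>j\<in>UNIV. \<bar>x j\<bar>)"
  define Q where "Q = \<mu> * max (2 / \<mu>) (exp (\<mu> / 2 + 1))"
  interpret vanishing_moments "Lam L" "\<lambda>n. gam \<omega> lam (freq L n)" "\<lambda>n. cos (dotp (freq L n) x)" c X
    unfolding c_def X_def by (rule vanishing_moments_lattice[OF \<omega> lam L x])
  have Q: "Q \<ge> 2" "Q \<ge> \<mu> * exp (\<mu> / 2 + 1)"
    using \<mu> by (auto simp: Q_def max_def field_simps)
  have "decay = exp (Q * c * \<bar>t\<bar> - \<mu> * X)"
    by (simp add: Q_def X_def c_def l1norm_def sum_nonneg algebra_simps)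
  then show "\<bar>gam_cos_sum \<omega> lam L (\<lambda>g. cos (2 * g * t)) x\<bar> \<le> N * decay"
    and "\<bar>gam_cos_sum \<omega> lam L (\<lambda>g. g * sin (2 * g * t)) x\<bar> \<le> N * c * exp (\<mu> / 2) * decay"
    and "\<bar>gam_cos_sum \<omega> lam L (\<lambda>g. sin (2 * g * t) / g) x\<bar> \<le> N / c * decay"
    using abs_sum_cos_decay[OF \<mu> Q] abs_sum_G_sin_decay[OF \<mu> Q] abs_sum_sin_div_G_decay[OF \<mu> Q]
    by (simp_all add: gam_cos_sum_def N_def)
qed

lemma abs_add_abs_gam_sin_sums_le:
  defines "N \<equiv> real (card (Lam L :: ('n \<Rightarrow> int) set))" and "c \<equiv> c_wl \<omega> lam"
  shows "(\<bar>gam_cos_sum \<omega> lam L (\<lambda>g. g * sin (2 * g * t)) x\<bar> + \<bar>gam_cos_sum \<omega> lam L (\<lambda>g. sin (2 * g * t) / g) x\<bar>)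
      / (2 * N) \<le> (c * exp (\<mu> / 2) / 2 + 1 / (2 * c)) * decay"
proof -
  have N: "N > 0" using card_Lam_pos[OF L] by (simp add: N_def)
  have "2 * N * ((c * exp (\<mu> / 2) / 2 + 1 / (2 * c)) * decay) = N * c * exp (\<mu> / 2) * decay + N / c * decay"
    using c_wl_pos[OF \<omega> lam] by (simp add: c_def field_simps)
  then show ?thesis
    using abs_gam_cos_sum_le(2,3) N by (simp add: N_def c_def pos_divide_le_eq mult.commute)
qed

lemma cmod_h1_le: "cmod (h1 \<omega> lam L t x) \<le> (1 + c_wl \<omega> lam * exp (\<mu> / 2) / 2 + 1 / (2 * c_wl \<omega> lam)) * decay"
proof -
  define N where "N = real (card (Lam L :: ('n \<Rightarrow> int) set))"
  define A B C where "A = gam_cos_sum \<omega> lam L (\<lambda>g. g * sin (2 * g * t)) x"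
    and "B = gam_cos_sum \<omega> lam L (\<lambda>g. sin (2 * g * t) / g) x"
    and "C = gam_cos_sum \<omega> lam L (\<lambda>g. cos (2 * g * t)) x"
  let ?a = "Im (avg \<omega> lam L (\<lambda>k. gam \<omega> lam k + 1 / gam \<omega> lam k) t x)"
  let ?b = "Re (avg \<omega> lam L (\<lambda>k. 1) t x)"
  have N: "N > 0" using card_Lam_pos[OF L] by (simp add: N_def)
  have a: "?a = (- A - B) / N" and b: "?b = C / N"
    using Im_avg_gam_plus[OF L, of \<omega> lam 1 t x] Re_avg_one[OF L, of \<omega> lam t x]
    by (simp_all add: A_def B_def C_def N_def)
  have "cmod (h1 \<omega> lam L t x) \<le> cmod (\<i> / 2 * complex_of_real ?a) + cmod (complex_of_real ?b)"
    unfolding h1_def by (rule norm_triangle_ineq)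
  also have "\<dots> = \<bar>- A - B\<bar> / (2 * N) + \<bar>C\<bar> / N"
    unfolding norm_mult norm_of_real a b using N by simp
  also have "\<dots> \<le> (\<bar>A\<bar> + \<bar>B\<bar>) / (2 * N) + \<bar>C\<bar> / N"
    using abs_triangle_ineq4[of "- A" B] N by (simp add: divide_right_mono)
  also have "\<dots> \<le> (c_wl \<omega> lam * exp (\<mu> / 2) / 2 + 1 / (2 * c_wl \<omega> lam)) * decay + decay"
    using abs_add_abs_gam_sin_sums_le abs_gam_cos_sum_le(1) N
    by (intro add_mono) (simp_all add: A_def B_def C_def N_def pos_divide_le_eq mult.commute)
  finally show ?thesis by (simp add: algebra_simps)
qed

lemma cmod_h2_le: "cmod (h2 \<omega> lam L t x) \<le> (c_wl \<omega> lam * exp (\<mu> / 2) / 2 + 1 / (2 * c_wl \<omega> lam)) * decay"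
proof -
  define N where "N = real (card (Lam L :: ('n \<Rightarrow> int) set))"
  define A B where "A = gam_cos_sum \<omega> lam L (\<lambda>g. g * sin (2 * g * t)) x"
    and "B = gam_cos_sum \<omega> lam L (\<lambda>g. sin (2 * g * t) / g) x"
  have N: "N > 0" using card_Lam_pos[OF L] by (simp add: N_def)
  have "(\<lambda>k. gam \<omega> lam k - 1 / gam \<omega> lam k) = (\<lambda>k. gam \<omega> lam k + (- 1) / gam \<omega> lam k)"
    by simp
  then have a: "Im (avg \<omega> lam L (\<lambda>k. gam \<omega> lam k - 1 / gam \<omega> lam k) t x) = (B - A) / N"
    using Im_avg_gam_plus[OF L, of \<omega> lam "-1" t x] by (simp add: A_def B_def N_def)
  have "cmod (h2 \<omega> lam L t x) = \<bar>B - A\<bar> / (2 * N)"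
    unfolding h2_def norm_mult norm_of_real a using N by simp
  also have "\<dots> \<le> (\<bar>A\<bar> + \<bar>B\<bar>) / (2 * N)"
    using abs_triangle_ineq4[of B A] N by (simp add: divide_right_mono)
  also have "\<dots> \<le> (c_wl \<omega> lam * exp (\<mu> / 2) / 2 + 1 / (2 * c_wl \<omega> lam)) * decay"
    using abs_add_abs_gam_sin_sums_le by (simp add: A_def B_def N_def)
  finally show ?thesis .
qed

end

theorem lemma3p4:
  fixes \<omega> :: real and lam :: "'n::finite \<Rightarrow> real" and L :: nat
    and \<mu> t :: real and x :: "'n \<Rightarrow> int"
  assumes "\<omega> > 0" and "\<forall>j. lam j \<ge> 0" and "L > 0"
    and "\<mu> > 0" and "x \<in> Lam L"
  shows "\<forall>h \<in> {h1 \<omega> lam L t x, h2 \<omega> lam L t x}.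
           cmod h \<le> (1 + c_wl \<omega> lam * exp (\<mu> / 2) / 2 + 1 / (2 * c_wl \<omega> lam)) *
             exp (- \<mu> * (l1norm x - c_wl \<omega> lam * max (2 / \<mu>) (exp (\<mu> / 2 + 1)) * \<bar>t\<bar>))"
proof -
  let ?E = "exp (- \<mu> * (l1norm x - c_wl \<omega> lam * max (2 / \<mu>) (exp (\<mu> / 2 + 1)) * \<bar>t\<bar>))"
  have "(c_wl \<omega> lam * exp (\<mu> / 2) / 2 + 1 / (2 * c_wl \<omega> lam)) * ?E
      \<le> (1 + c_wl \<omega> lam * exp (\<mu> / 2) / 2 + 1 / (2 * c_wl \<omega> lam)) * ?E"
    by (intro mult_right_mono) auto
  from order.trans[OF cmod_h2_le[OF assms, of t] this] cmod_h1_le[OF assms, of t]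
  show ?thesis by simp
qed

end
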